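(* Let $K$ be a field, $X$ a set, $>$ a semigroup well-ordering on $X^\dagger$, and $F=(F_T,F_P)$ with $F_T\subseteq K[\dashv\! X^\dagger]$ and $F_P\subseteq K[X^\dagger]$. If $f$ is an S-polynomial resulting from a match of $F$, then the equivalence relations $\stackrel{*}{\leftrightarrow}_F$ and $\stackrel{*}{\leftrightarrow}_{F\cup\{f\}}$ on $K[\dashv\! X^\dagger]$ coincide (where $f$ is added to the tagged part if $f$ is tagged and to the untagged part otherwise).
   Context: $X^\dagger$ is the free semigroup of nonempty words on $X$, $X^*$ the free monoid (empty word $id$), $K[X^\dagger]$ the free noncommutative $K$-algebra. A semigroup well-ordering is a well-ordering $>$ on $X^\dagger$ with $m_1>m_2\Rightarrow um_1v>um_2v$ for all $u,v\in X^*$. For a nonzero polynomial, $\mathtt{LT}$ is its largest term and $\mathtt{LC}$ its coefficient. The paper assumes all polynomials are monic (leading coefficient $1$). Tagged polynomials: $\dashv$ is a symbol; $K[\dashv\! X^\dagger]$ is the $K$-vector space with basis the tagged terms $\dashv\! m$ ($m\in X^\dagger$), a right $K[X^\dagger]$-module via $(\dashv\! m)w=\dashv\!(mw)$. For $p=\sum k_im_i\in K[X^\dagger]$, $w\in X^*$: $\dashv\! w\,p:=\sum k_i\dashv\!(wm_i)$. Tagged terms are ordered by $\dashv\! m_1>\dashv\! m_2\iff m_1>m_2$. Reduction: $f\to_F f-k f_iv$ if $f_i\in F_T$, $v\in X^*$ and $\mathtt{LT}(f_i)v$ occurs in $f$ with coefficient $k\neq0$; and $f\to_F f-k\dashv\!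 w\,f_i\,v$ if $f_i\in F_P$, $w,v\in X^*$ and $\dashv\!(w\,\mathtt{LT}(f_i)\,v)$ occurs in $f$ with coefficient $k\neq0$. $\stackrel{*}{\leftrightarrow}_F$ is the reflexive, symmetric, transitive closure of $\to_F$. Matches and S-polynomials: for $f_1,f_2\in F$ with leading terms $m_1,m_2$: (i) $f_1,f_2\in F_T$, $m_1v=m_2$ ($v\in X^*$): S-polynomial $f_1v-f_2$; (ii) $f_1\in F_T,f_2\in F_P$, $m_1v=\dashv\! u\,m_2$ ($u,v\in X^*$): $f_1v-\dashv\! u\,f_2$; (iii) $f_1\in F_T,f_2\in F_P$, $m_1=\dashv\!(um_2v)$: $f_1-\dashv\! u\,f_2\,v$; (iv) $f_1,f_2\in F_P$, $um_1=m_2v$ ($u,v\in X^*$): $uf_1-f_2v$; (v) $f_1,f_2\in F_P$, $m_1=um_2v$: $f_1-uf_2v$. S-polynomials of types (i)–(iii) are tagged, those of types (iv)–(v) are untagged elements of $K[X^\dagger]$. *)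

theory Defs
  imports "HOL-Library.Poly_Mapping"
begin

text \<open>Words over the alphabet (the type 'x plays the role of the set X) are lists;
  X^dagger = nonempty lists, X^* = all lists (the empty list is id).
  Both K[X^dagger] and the tagged module K[-| X^dagger] are represented by finitely
  supported coefficient functions (poly mappings) supported on nonempty words;
  a tagged term -|m is represented by the word m.\<close>

definition valid_poly :: "('x list \<Rightarrow>\<^sub>0 'k::zero) \<Rightarrow> bool" where
  "valid_poly p \<longleftrightarrow> (\<forall>m\<in>Poly_Mapping.keys p. m \<noteq> [])"

definition semigroup_wellorder :: "('x list \<Rightarrow> 'x list \<Rightarrow> bool) \<Rightarrow> bool" where
  "semigroup_wellorder gt \<longleftrightarrow>
     (\<forall>a b. gt a b \<longrightarrow> a \<noteq> [] \<and> b \<noteq> []) \<and>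
     (\<forall>a. \<not> gt a a) \<and>
     (\<forall>a b c. gt a b \<longrightarrow> gt b c \<longrightarrow> gt a c) \<and>
     (\<forall>a b. a \<noteq> [] \<longrightarrow> b \<noteq> [] \<longrightarrow> a \<noteq> b \<longrightarrow> gt a b \<or> gt b a) \<and>
     wfp (\<lambda>a b. gt b a) \<and>
     (\<forall>m1 m2 u v. gt m1 m2 \<longrightarrow> gt (u @ m1 @ v) (u @ m2 @ v))"

definition LT :: "('x list \<Rightarrow> 'x list \<Rightarrow> bool) \<Rightarrow> ('x list \<Rightarrow>\<^sub>0 'k::zero) \<Rightarrow> 'x list" where
  "LT gt p = (THE m. m \<in> Poly_Mapping.keys p \<and> (\<forall>m'\<in>Poly_Mapping.keys p. m' \<noteq> m \<longrightarrow> gt m m'))"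

definition LC :: "('x list \<Rightarrow> 'x list \<Rightarrow> bool) \<Rightarrow> ('x list \<Rightarrow>\<^sub>0 'k::zero) \<Rightarrow> 'k" where
  "LC gt p = Poly_Mapping.lookup p (LT gt p)"

definition monic :: "('x list \<Rightarrow> 'x list \<Rightarrow> bool) \<Rightarrow> ('x list \<Rightarrow>\<^sub>0 'k::{zero,one}) \<Rightarrow> bool" where
  "monic gt p \<longleftrightarrow> p \<noteq> 0 \<and> LC gt p = 1"

text \<open>cmul k u p v = k * (u p v); with u the tag prefix this is k * (-| u p v).\<close>
definition cmul :: "'k::semiring_0 \<Rightarrow> 'x list \<Rightarrow> ('x list \<Rightarrow>\<^sub>0 'k) \<Rightarrow> 'x list \<Rightarrow> ('x list \<Rightarrow>\<^sub>0 'k)" where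
  "cmul k u p v = (\<Sum>m\<in>Poly_Mapping.keys p. Poly_Mapping.single (u @ m @ v) (k * Poly_Mapping.lookup p m))"

abbreviation mmul :: "'x list \<Rightarrow> ('x list \<Rightarrow>\<^sub>0 'k::semiring_1) \<Rightarrow> 'x list \<Rightarrow> ('x list \<Rightarrow>\<^sub>0 'k)" where
  "mmul u p v \<equiv> cmul 1 u p v"

definition red :: "('x list \<Rightarrow> 'x list \<Rightarrow> bool) \<Rightarrow> ('x list \<Rightarrow>\<^sub>0 'k::field) set \<Rightarrow> ('x list \<Rightarrow>\<^sub>0 'k) set
    \<Rightarrow> ('x list \<Rightarrow>\<^sub>0 'k) \<Rightarrow> ('x list \<Rightarrow>\<^sub>0 'k) \<Rightarrow> bool" where
  "red gt FT FP f g \<longleftrightarrow> valid_poly f \<and>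
     ((\<exists>fi\<in>FT. \<exists>v. Poly_Mapping.lookup f (LT gt fi @ v) \<noteq> 0 \<and>
                   g = f - cmul (Poly_Mapping.lookup f (LT gt fi @ v)) [] fi v) \<or>
      (\<exists>fi\<in>FP. \<exists>w v. Poly_Mapping.lookup f (w @ LT gt fi @ v) \<noteq> 0 \<and>
                   g = f - cmul (Poly_Mapping.lookup f (w @ LT gt fi @ v)) w fi v))"

definition red_equiv :: "('x list \<Rightarrow> 'x list \<Rightarrow> bool) \<Rightarrow> ('x list \<Rightarrow>\<^sub>0 'k::field) set \<Rightarrow> ('x list \<Rightarrow>\<^sub>0 'k) set
    \<Rightarrow> ('x list \<Rightarrow>\<^sub>0 'k) \<Rightarrow> ('x list \<Rightarrow>\<^sub>0 'k) \<Rightarrow> bool" where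
  "red_equiv gt FT FP = (\<lambda>f g. red gt FT FP f g \<or> red gt FT FP g f)\<^sup>*\<^sup>*"

definition tagged_spoly :: "('x list \<Rightarrow> 'x list \<Rightarrow> bool) \<Rightarrow> ('x list \<Rightarrow>\<^sub>0 'k::field) set \<Rightarrow> ('x list \<Rightarrow>\<^sub>0 'k) set
    \<Rightarrow> ('x list \<Rightarrow>\<^sub>0 'k) \<Rightarrow> bool" where
  "tagged_spoly gt FT FP f \<longleftrightarrow>
     (\<exists>f1\<in>FT. \<exists>f2\<in>FT. \<exists>v. LT gt f1 @ v = LT gt f2 \<and> f = mmul [] f1 v - f2) \<or>
     (\<exists>f1\<in>FT. \<exists>f2\<in>FP. \<exists>u v. LT gt f1 @ v = u @ LT gt f2 \<and> f = mmul [] f1 v - mmul u f2 []) \<or>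
     (\<exists>f1\<in>FT. \<exists>f2\<in>FP. \<exists>u v. LT gt f1 = u @ LT gt f2 @ v \<and> f = f1 - mmul u f2 v)"

definition untagged_spoly :: "('x list \<Rightarrow> 'x list \<Rightarrow> bool) \<Rightarrow> ('x list \<Rightarrow>\<^sub>0 'k::field) set \<Rightarrow> ('x list \<Rightarrow>\<^sub>0 'k) set
    \<Rightarrow> ('x list \<Rightarrow>\<^sub>0 'k) \<Rightarrow> bool" where
  "untagged_spoly gt FT FP f \<longleftrightarrow>
     (\<exists>f1\<in>FP. \<exists>f2\<in>FP. \<exists>u v. u @ LT gt f1 = LT gt f2 @ v \<and> f = mmul u f1 [] - mmul [] f2 v) \<or>
     (\<exists>f1\<in>FP. \<exists>f2\<in>FP. \<exists>u v. LT gt f1 = u @ LT gt f2 @ v \<and> f = f1 - mmul u f2 v)"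

end

theory Submission imports Defs begin

text \<open>Let \<open>p \<in> F\<close> be monic and \<open>m = w p v\<close> a multiple of it that a reduction step may subtract.
  Then \<open>g \<leftrightarrow>\<^sup>* g + c m\<close> for every \<open>c\<close>: reducing \<open>g\<close> by \<open>p\<close> at the term \<open>w LT(p) v\<close>
  kills its coefficient there, and \<open>g + c m\<close> reduces to the same polynomial. Every
  S-polynomial is \<open>a - b\<close> for two such multiples \<open>a\<close>, \<open>b\<close> of elements of \<open>F\<close>, and so is every
  multiple of it; hence a reduction step by the S-polynomial is the composite of two
  \<open>\<leftrightarrow>\<^sup>*\<^sub>F\<close>-chains of this kind, and adding it to \<open>F\<close> does not change the equivalence closure.\<close>

lemma lookup_cmul:
  "Poly_Mapping.lookup (cmul k u p v) x =
     (if \<exists>m. x = u @ m @ v then k * Poly_Mapping.lookup p (THE m. x = u @ m @ v) else 0)"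
proof (cases "\<exists>m. x = u @ m @ v")
  case True
  then obtain m0 where x: "x = u @ m0 @ v" by blast
  have "Poly_Mapping.lookup (cmul k u p v) x =
        (\<Sum>m\<in>Poly_Mapping.keys p. if m = m0 then k * Poly_Mapping.lookup p m else 0)"
    unfolding cmul_def lookup_sum lookup_single x
    by (rule sum.cong) (auto simp: when_def)
  also have "\<dots> = k * Poly_Mapping.lookup p m0"
    by (simp add: sum.delta' in_keys_iff)
  finally show ?thesis using x by simp
next
  case False
  then show ?thesis unfolding cmul_def lookup_sum lookup_single
    by (auto simp: when_def intro!: sum.neutral)
qed

lemma lookup_cmul_infix [simp]:
  "Poly_Mapping.lookup (cmul k u p v) (u @ m @ v) = k * Poly_Mapping.lookup p m"
  by (simp add: lookup_cmul)

lemma cmul_diff: "cmul (k::'k::ring) u (p - q) v = cmul k u p v - cmul k u q v"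
  by (rule poly_mapping_eqI) (simp add: lookup_cmul lookup_minus algebra_simps)

lemma cmul_add_coeff: "cmul (a + b::'k::semiring_0) u p v = cmul a u p v + cmul b u p v"
  by (rule poly_mapping_eqI) (simp add: lookup_cmul lookup_add algebra_simps)

lemma cmul_minus_coeff: "cmul (- a::'k::ring) u p v = - cmul a u p v"
  by (rule poly_mapping_eqI) (simp add: lookup_cmul)

lemma cmul_zero_coeff: "cmul 0 u p v = 0"
  by (rule poly_mapping_eqI) (simp add: lookup_cmul)

lemma cmul_cmul: "cmul k u (cmul c u' p v') v = cmul (k * c) (u @ u') p (v' @ v)"
proof (rule poly_mapping_eqI)
  fix x
  show "Poly_Mapping.lookup (cmul k u (cmul c u' p v') v) x =
        Poly_Mapping.lookup (cmul (k * c) (u @ u') p (v' @ v)) x"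
  proof (cases "\<exists>m. x = u @ u' @ m @ v' @ v")
    case True
    then obtain m where "x = u @ (u' @ m @ v') @ v" by auto
    then show ?thesis by (metis append.assoc lookup_cmul_infix mult.assoc)
  next
    case False
    then show ?thesis by (auto simp: lookup_cmul)
  qed
qed

lemma valid_poly_iff_lookup_Nil: "valid_poly p \<longleftrightarrow> Poly_Mapping.lookup p [] = 0"
  unfolding valid_poly_def by (metis in_keys_iff)

lemma valid_poly_add: "valid_poly p \<Longrightarrow> valid_poly q \<Longrightarrow> valid_poly (p + q)"
  by (simp add: valid_poly_iff_lookup_Nil lookup_add)

lemma valid_poly_diff: "valid_poly p \<Longrightarrow> valid_poly q \<Longrightarrow> valid_poly (p - q)"
  by (simp add: valid_poly_iff_lookup_Nil lookup_minus)

lemma valid_poly_cmul: "valid_poly p \<Longrightarrow> valid_poly (cmul k u p v)"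
  by (auto simp: valid_poly_iff_lookup_Nil lookup_cmul)

lemma equivclp_le_equivclp: "r \<le> equivclp s \<Longrightarrow> equivclp r \<le> equivclp s"
  unfolding equivclp_def[of r]
  by (metis rtranclp_mono rtranclp_equivclp symclp_equivclp symclp_pointfree sup_mono conversep_mono)

lemma equivclp_add_multiple:
  fixes r :: "('x list \<Rightarrow>\<^sub>0 'k::field) \<Rightarrow> ('x list \<Rightarrow>\<^sub>0 'k) \<Rightarrow> bool"
  assumes reduce: "\<And>g. valid_poly g \<Longrightarrow> Poly_Mapping.lookup g (w @ t @ v) \<noteq> 0 \<Longrightarrow>
              r g (g - cmul (Poly_Mapping.lookup g (w @ t @ v)) w p v)"
    and p: "valid_poly p" "Poly_Mapping.lookup p t = 1"
    and g: "valid_poly g"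
  shows "equivclp r g (g + cmul c w p v)"
proof -
  let ?T = "w @ t @ v"
  have from_zero_coeff: "equivclp r g0 (g0 + cmul d w p v)"
    if g0: "valid_poly g0" "Poly_Mapping.lookup g0 ?T = 0" for g0 d
  proof (cases "d = 0")
    case True
    then show ?thesis by (simp add: cmul_zero_coeff)
  next
    case False
    have "Poly_Mapping.lookup (g0 + cmul d w p v) ?T = d"
      using g0 p by (simp add: lookup_add)
    with reduce[of "g0 + cmul d w p v"] False g0 p
    have "r (g0 + cmul d w p v) g0" by (simp add: valid_poly_add valid_poly_cmul)
    then show ?thesis by blast
  qed
  show ?thesis
  proof (cases "Poly_Mapping.lookup g ?T = 0")
    case True
    with g show ?thesis by (rule from_zero_coeff)
  next
    case False
    define a where "a = Poly_Mapping.lookup g ?T"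
    define g1 where "g1 = g - cmul a w p v"
    have "r g g1"
      using reduce[OF g] False unfolding g1_def a_def by simp
    moreover have "equivclp r g1 (g1 + cmul (a + c) w p v)"
      by (rule from_zero_coeff)
        (use g p in \<open>simp_all add: g1_def a_def lookup_minus valid_poly_diff valid_poly_cmul\<close>)
    moreover have "g1 + cmul (a + c) w p v = g + cmul c w p v"
      by (simp add: g1_def cmul_add_coeff)
    ultimately show ?thesis by (metis r_into_equivclp equivclp_trans)
  qed
qed

lemma red_equiv_eq_equivclp: "red_equiv gt FT FP = equivclp (red gt FT FP)"
  by (simp add: red_equiv_def equivclp_def symclp_def[abs_def])

lemma red_mono: "FT \<subseteq> FT' \<Longrightarrow> FP \<subseteq> FP' \<Longrightarrow> red gt FT FP \<le> red gt FT' FP'"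
  unfolding red_def by blast

lemma red_equiv_add_multiple:
  assumes "p \<in> FT \<and> w = [] \<or> p \<in> FP" and "valid_poly p" "monic gt p" "valid_poly g"
  shows "red_equiv gt FT FP g (g + cmul c w p v)"
proof -
  have "red gt FT FP g' (g' - cmul (Poly_Mapping.lookup g' (w @ LT gt p @ v)) w p v)"
    if "valid_poly g'" "Poly_Mapping.lookup g' (w @ LT gt p @ v) \<noteq> 0" for g'
    using assms(1) that unfolding red_def by (elim disjE conjE) (simp, blast)+
  then show ?thesis
    unfolding red_equiv_eq_equivclp
    by (rule equivclp_add_multiple) (use assms in \<open>simp_all add: monic_def LC_def\<close>)
qed

lemma red_equiv_add_two_multiples:
  assumes F: "\<forall>p\<in>FT \<union> FP. valid_poly p \<and> monic gt p"
    and p1: "p1 \<in> FT \<and> w1 = [] \<or> p1 \<in> FP" and p2: "p2 \<in> FT \<and> w2 = [] \<or> p2 \<in> FP"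
    and s: "valid_poly s"
  shows "red_equiv gt FT FP s (s + cmul c1 w1 p1 v1 + cmul c2 w2 p2 v2)"
proof -
  have "valid_poly p1" "monic gt p1" "valid_poly p2" "monic gt p2"
    using F p1 p2 by auto
  then show ?thesis
    using red_equiv_add_multiple[OF p1 _ _ s] red_equiv_add_multiple[OF p2]
    by (metis equivclp_trans red_equiv_eq_equivclp s valid_poly_add valid_poly_cmul)
qed

lemma red_equiv_minus_tagged_spoly_multiple:
  assumes F: "\<forall>p\<in>FT \<union> FP. valid_poly p \<and> monic gt p"
    and "tagged_spoly gt FT FP f" and s: "valid_poly s"
  shows "red_equiv gt FT FP s (s - cmul k [] f v)"
  using assms(2) unfolding tagged_spoly_def
proof (elim disjE bexE exE conjE)
  fix f1 f2 v1 assume "f1 \<in> FT" "f2 \<in> FT" and "f = mmul [] f1 v1 - f2"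
  moreover from this have "s - cmul k [] f v = s + cmul (-k) [] f1 (v1 @ v) + cmul k [] f2 v"
    by (simp add: cmul_diff cmul_cmul cmul_minus_coeff)
  ultimately show ?thesis
    by (metis red_equiv_add_two_multiples[OF F _ _ s])
next
  fix f1 f2 u v1 assume "f1 \<in> FT" "f2 \<in> FP" and "f = mmul [] f1 v1 - mmul u f2 []"
  moreover from this have "s - cmul k [] f v = s + cmul (-k) [] f1 (v1 @ v) + cmul k u f2 v"
    by (simp add: cmul_diff cmul_cmul cmul_minus_coeff)
  ultimately show ?thesis
    by (metis red_equiv_add_two_multiples[OF F _ _ s])
next
  fix f1 f2 u v1 assume "f1 \<in> FT" "f2 \<in> FP" and "f = f1 - mmul u f2 v1"
  moreover from this have "s - cmul k [] f v = s + cmul (-k) [] f1 v + cmul k u f2 (v1 @ v)"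
    by (simp add: cmul_diff cmul_cmul cmul_minus_coeff)
  ultimately show ?thesis
    by (metis red_equiv_add_two_multiples[OF F _ _ s])
qed

lemma red_equiv_minus_untagged_spoly_multiple:
  assumes F: "\<forall>p\<in>FT \<union> FP. valid_poly p \<and> monic gt p"
    and "untagged_spoly gt FT FP f" and s: "valid_poly s"
  shows "red_equiv gt FT FP s (s - cmul k w f v)"
  using assms(2) unfolding untagged_spoly_def
proof (elim disjE bexE exE conjE)
  fix f1 f2 u v1 assume "f1 \<in> FP" "f2 \<in> FP" and "f = mmul u f1 [] - mmul [] f2 v1"
  moreover from this have "s - cmul k w f v = s + cmul (-k) (w @ u) f1 v + cmul k w f2 (v1 @ v)"
    by (simp add: cmul_diff cmul_cmul cmul_minus_coeff)
  ultimately show ?thesis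
    by (metis red_equiv_add_two_multiples[OF F _ _ s])
next
  fix f1 f2 u v1 assume "f1 \<in> FP" "f2 \<in> FP" and "f = f1 - mmul u f2 v1"
  moreover from this have "s - cmul k w f v = s + cmul (-k) w f1 v + cmul k (w @ u) f2 (v1 @ v)"
    by (simp add: cmul_diff cmul_cmul cmul_minus_coeff)
  ultimately show ?thesis
    by (metis red_equiv_add_two_multiples[OF F _ _ s])
qed

lemma red_insert_tagged_spoly_le_red_equiv:
  assumes F: "\<forall>p\<in>FT \<union> FP. valid_poly p \<and> monic gt p" and "tagged_spoly gt FT FP f"
  shows "red gt (insert f FT) FP \<le> red_equiv gt FT FP"
proof (intro predicate2I)
  fix s t assume st: "red gt (insert f FT) FP s t"
  then have s: "valid_poly s" by (simp add: red_def)
  from st consider "red gt FT FP s t" | k v where "t = s - cmul k [] f v"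
    unfolding red_def by blast
  then show "red_equiv gt FT FP s t"
  proof cases
    case 1
    then show ?thesis by (simp add: red_equiv_eq_equivclp r_into_equivclp)
  next
    case 2
    then show ?thesis using red_equiv_minus_tagged_spoly_multiple[OF F assms(2) s] by simp
  qed
qed

lemma red_insert_untagged_spoly_le_red_equiv:
  assumes F: "\<forall>p\<in>FT \<union> FP. valid_poly p \<and> monic gt p" and "untagged_spoly gt FT FP f"
  shows "red gt FT (insert f FP) \<le> red_equiv gt FT FP"
proof (intro predicate2I)
  fix s t assume st: "red gt FT (insert f FP) s t"
  then have s: "valid_poly s" by (simp add: red_def)
  from st consider "red gt FT FP s t" | k w v where "t = s - cmul k w f v"
    unfolding red_def by blast
  then show "red_equiv gt FT FP s t"
  proof cases
    case 1
    then show ?thesis by (simp add: red_equiv_eq_equivclp r_into_equivclp)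
  next
    case 2
    then show ?thesis using red_equiv_minus_untagged_spoly_multiple[OF F assms(2) s] by simp
  qed
qed

theorem lemma4p7:
  fixes gt :: "'x list \<Rightarrow> 'x list \<Rightarrow> bool"
    and FT FP :: "('x list \<Rightarrow>\<^sub>0 'k::field) set"
    and f :: "'x list \<Rightarrow>\<^sub>0 'k"
  assumes "semigroup_wellorder gt"
    and "\<forall>p\<in>FT. valid_poly p" and "\<forall>p\<in>FP. valid_poly p"
    and "\<forall>p\<in>FT \<union> FP. monic gt p"
  shows "(tagged_spoly gt FT FP f \<longrightarrow>
           (\<forall>g h. valid_poly g \<longrightarrow> valid_poly h \<longrightarrow>
              (red_equiv gt FT FP g h \<longleftrightarrow> red_equiv gt (insert f FT) FP g h)))
       \<and> (untagged_spoly gt FT FP f \<longrightarrow>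
           (\<forall>g h. valid_poly g \<longrightarrow> valid_poly h \<longrightarrow>
              (red_equiv gt FT FP g h \<longleftrightarrow> red_equiv gt FT (insert f FP) g h)))"
proof -
  have F: "\<forall>p\<in>FT \<union> FP. valid_poly p \<and> monic gt p"
    using assms(2-4) by blast
  have "red_equiv gt FT FP = red_equiv gt (insert f FT) FP" if "tagged_spoly gt FT FP f"
    using red_insert_tagged_spoly_le_red_equiv[OF F that]
      red_mono[of FT "insert f FT" FP FP gt]
    unfolding red_equiv_eq_equivclp
    by (intro antisym equivclp_le_equivclp) (auto intro: r_into_equivclp)
  moreover have "red_equiv gt FT FP = red_equiv gt FT (insert f FP)" if "untagged_spoly gt FT FP f"
    using red_insert_untagged_spoly_le_red_equiv[OF F that]
      red_mono[of FT FT FP "insert f FP" gt]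
    unfolding red_equiv_eq_equivclp
    by (intro antisym equivclp_le_equivclp) (auto intro: r_into_equivclp)
  ultimately show ?thesis by simp
qed

end
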